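(* Let $A$ be an $n\times m$ Boolean matrix and $B$ an $m\times n$ Boolean matrix, and suppose neither $A$ nor $B$ has a zero line (zero row or zero column). If $AB$ and $BA$ are both primitive, then $$|k(AB)-k(BA)|\leq 1.$$
   Context: All matrices are Boolean $(0,1)$-matrices, and products are computed in Boolean arithmetic ($1+1=1$, $0+0=0$, $1+0=1$). A square nonnegative (Boolean) matrix $C$ is primitive if $C^r$ has all entries positive for some positive integer $r$. For a primitive matrix $C$, its scrambling index $k(C)$ is the smallest positive integer $k$ such that any two rows of $C^k$ have a positive entry in a common position; equivalently, the smallest positive integer $k$ with $C^k(C^t)^k=J$, where $C^t$ is the transpose and $J$ is the all-ones matrix. *)

theory Defs
  imports Main
begin

text \<open>Boolean (0,1)-matrices with rows indexed by a finite type 'a and columns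
  by a finite type 'b, represented as functions 'a \<Rightarrow> 'b \<Rightarrow> bool
  (True = entry 1).\<close>

type_synonym ('a, 'b) bmat = "'a \<Rightarrow> 'b \<Rightarrow> bool"

definition bmult :: "('a, 'b) bmat \<Rightarrow> ('b, 'c) bmat \<Rightarrow> ('a, 'c) bmat" where
  "bmult A B = (\<lambda>i j. \<exists>k. A i k \<and> B k j)"

definition bident :: "('a, 'a) bmat" where
  "bident = (\<lambda>i j. i = j)"

fun bpow :: "('a, 'a) bmat \<Rightarrow> nat \<Rightarrow> ('a, 'a) bmat" where
  "bpow C 0 = bident"
| "bpow C (Suc k) = bmult C (bpow C k)"

definition btrans :: "('a, 'b) bmat \<Rightarrow> ('b, 'a) bmat" where
  "btrans A = (\<lambda>j i. A i j)"

definition bJ :: "('a, 'b) bmat" where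
  "bJ = (\<lambda>i j. True)"

definition no_zero_line :: "('a, 'b) bmat \<Rightarrow> bool" where
  "no_zero_line A \<longleftrightarrow> (\<forall>i. \<exists>j. A i j) \<and> (\<forall>j. \<exists>i. A i j)"

definition primitive :: "('a::finite, 'a) bmat \<Rightarrow> bool" where
  "primitive C \<longleftrightarrow> (\<exists>r>0. bpow C r = bJ)"

definition scrambling_index :: "('a::finite, 'a) bmat \<Rightarrow> nat" where
  "scrambling_index C = (LEAST k. k > 0 \<and> bmult (bpow C k) (bpow (btrans C) k) = bJ)"

end

theory Submission
  imports Defs
begin

text \<open>Since \<open>(AB)\<^sup>k\<^sup>+\<^sup>1 = A (BA)\<^sup>k B\<close>, two rows \<open>i, j\<close> of \<open>(AB)\<^sup>k\<^sup>+\<^sup>1\<close> meet as soon as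
  the rows of \<open>(BA)\<^sup>k\<close> selected by nonzero entries \<open>A i a\<close>, \<open>A j a'\<close> meet in some column
  \<open>l\<close>, and row \<open>l\<close> of \<open>B\<close> is nonzero. Hence \<open>k(AB) \<le> k(BA) + 1\<close> when \<open>A\<close> and \<open>B\<close>
  have no zero rows, and symmetrically.\<close>

lemma bmult_assoc: "bmult (bmult A B) C = bmult A (bmult B C)"
  unfolding bmult_def by (intro ext) blast

lemma bmult_bident_left [simp]: "bmult bident A = A"
  unfolding bmult_def bident_def by simp

lemma bmult_bident_right [simp]: "bmult A bident = A"
  unfolding bmult_def bident_def by simp

lemma bpow_Suc_right: "bpow C (Suc k) = bmult (bpow C k) C"
  by (induction k) (simp_all add: bmult_assoc [symmetric])

lemma bpow_btrans: "bpow (btrans C) k = btrans (bpow C k)"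
proof (induction k)
  case 0
  show ?case by (auto simp: bident_def btrans_def)
next
  case (Suc k)
  have "bpow (btrans C) (Suc k) = bmult (btrans C) (btrans (bpow C k))"
    by (simp add: Suc)
  also have "\<dots> = btrans (bmult (bpow C k) C)"
    by (auto simp: bmult_def btrans_def fun_eq_iff)
  finally show ?case
    by (simp only: bpow_Suc_right)
qed

lemma bpow_bmult_Suc: "bpow (bmult A B) (Suc k) = bmult A (bmult (bpow (bmult B A) k) B)"
proof (induction k)
  case 0
  show ?case by simp
next
  case (Suc k)
  have "bpow (bmult A B) (Suc (Suc k)) = bmult (bmult A B) (bmult A (bmult (bpow (bmult B A) k) B))"
    using Suc by simp
  also have "\<dots> = bmult A (bmult (bmult (bmult B A) (bpow (bmult B A) k)) B)"
    by (simp add: bmult_assoc)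
  finally show ?case by simp
qed

definition scrambles :: "('a, 'a) bmat \<Rightarrow> nat \<Rightarrow> bool" where
  "scrambles C k \<longleftrightarrow> (\<forall>i j. \<exists>l. bpow C k i l \<and> bpow C k j l)"

lemma bmult_bpow_btrans_eq_bJ_iff:
  "bmult (bpow C k) (bpow (btrans C) k) = bJ \<longleftrightarrow> scrambles C k"
  unfolding bpow_btrans by (simp add: scrambles_def bJ_def bmult_def btrans_def fun_eq_iff)

lemma scrambling_index_eq_Least:
  "scrambling_index C = (LEAST k. 0 < k \<and> scrambles C k)"
  unfolding scrambling_index_def bmult_bpow_btrans_eq_bJ_iff ..

lemma primitive_imp_scrambles:
  assumes "primitive C"
  obtains k where "0 < k" "scrambles C k"
  using assms unfolding primitive_def scrambles_def bJ_def by auto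

lemma scrambles_scrambling_index:
  assumes "primitive C"
  shows "0 < scrambling_index C" "scrambles C (scrambling_index C)"
proof -
  obtain k where "0 < k \<and> scrambles C k"
    using primitive_imp_scrambles [OF assms] by blast
  then have "0 < scrambling_index C \<and> scrambles C (scrambling_index C)"
    unfolding scrambling_index_eq_Least by (rule LeastI)
  then show "0 < scrambling_index C" "scrambles C (scrambling_index C)"
    by blast+
qed

lemma scrambling_index_le:
  assumes "0 < k" "scrambles C k"
  shows "scrambling_index C \<le> k"
  unfolding scrambling_index_eq_Least using assms by (intro Least_le) simp

lemma scrambles_bmult_Suc:
  assumes A_rows: "\<forall>i. \<exists>j. A i j" and B_rows: "\<forall>i. \<exists>j. B i j"
    and "scrambles (bmult B A) k"
  shows "scrambles (bmult A B) (Suc k)"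
  unfolding scrambles_def bpow_bmult_Suc
proof (intro allI)
  fix i j
  obtain a a' where "A i a" "A j a'"
    using A_rows by blast
  moreover obtain l where "bpow (bmult B A) k a l" "bpow (bmult B A) k a' l"
    using \<open>scrambles (bmult B A) k\<close> unfolding scrambles_def by blast
  moreover obtain c where "B l c"
    using B_rows by blast
  ultimately show "\<exists>c. bmult A (bmult (bpow (bmult B A) k) B) i c
      \<and> bmult A (bmult (bpow (bmult B A) k) B) j c"
    unfolding bmult_def by blast
qed

lemma scrambling_index_bmult_le_Suc:
  assumes "\<forall>i. \<exists>j. A i j" "\<forall>i. \<exists>j. B i j" "primitive (bmult B A)"
  shows "scrambling_index (bmult A B) \<le> Suc (scrambling_index (bmult B A))"
  using assms scrambles_scrambling_index [OF assms(3)]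
  by (intro scrambling_index_le scrambles_bmult_Suc) simp_all

theorem lemma2p1:
  fixes A :: "('n::finite, 'm::finite) bmat" and B :: "('m, 'n) bmat"
  assumes "no_zero_line A" and "no_zero_line B"
    and "primitive (bmult A B)" and "primitive (bmult B A)"
  shows "\<bar>int (scrambling_index (bmult A B)) - int (scrambling_index (bmult B A))\<bar> \<le> 1"
proof -
  have A_rows: "\<forall>i. \<exists>j. A i j" and B_rows: "\<forall>i. \<exists>j. B i j"
    using assms(1,2) unfolding no_zero_line_def by auto
  have "scrambling_index (bmult A B) \<le> Suc (scrambling_index (bmult B A))"
    using A_rows B_rows assms(4) by (rule scrambling_index_bmult_le_Suc)
  moreover have "scrambling_index (bmult B A) \<le> Suc (scrambling_index (bmult A B))"
    using B_rows A_rows assms(3) by (rule scrambling_index_bmult_le_Suc)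
  ultimately show ?thesis
    by linarith
qed

end
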